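(* Let $K\subseteq\mathbb{R}^n$ be a convex polytope. (a) If $K$ has $m$ vertices with $m\geq n+1$, and $t=2^{n/(m-1)}$, then $$\Gamma_{2^n}(K)\leq\frac{m-1}{m-1+k(m-1,t)}\leq\frac{m-1}{m-1+\lfloor a(t)(m-1)\rfloor}.$$ (b) If $K$ is centrally symmetric and has $2m$ vertices with $m\geq n$, and $t=2^{n/m}$, then $$\Gamma_{2^n}(K)\leq\frac{m}{m+l(m,t)}\leq\frac{m}{m+\lfloor b(t)m\rfloor}.$$
   Context: For a compact convex set $K\subseteq\mathbb{R}^n$ and $N\in\mathbb{Z}^+$, the covering functional is $\Gamma_N(K)=\inf\{\gamma>0:\exists C\subseteq\mathbb{R}^n,\ |C|=N,\ K\subseteq C+\gamma K\}$. Let $f(x)=\frac{(1+x)^{1+x}}{x^x}$ and $g(x)=\frac{2^x(1+x)^{1+x}}{x^x}$ on $(0,\infty)$ (strictly increasing, tending to $1$ as $x\to0^+$); for $t>1$, $a(t)$ and $b(t)$ are the unique solutions of $f(x)=t$ and $g(x)=t$. For $t\in(1,2]$ and $d\in\mathbb{Z}^+$, $k(d,t)$ is the nonnegative integer with $\binom{d+k(d,t)}{d}\leq t^d<\binom{d+k(d,t)+1}{d}$, and $l(d,t)$ is the nonnegative integer with $2^{l(d,t)}\binom{d+l(d,t)}{d}\leq t^d<2^{l(d,t)+1}\binom{d+l(d,t)+1}{d}$. *)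

theory Defs
  imports "HOL-Analysis.Analysis"
begin

definition covering_functional :: "nat \<Rightarrow> 'a::euclidean_space set \<Rightarrow> real" where
  "covering_functional N K = Inf {\<gamma>. \<gamma> > 0 \<and>
     (\<exists>C. finite C \<and> card C = N \<and> K \<subseteq> (\<Union>c\<in>C. (\<lambda>x. c + \<gamma> *\<^sub>R x) ` K))}"

definition ffun :: "real \<Rightarrow> real" where
  "ffun x = (1 + x) powr (1 + x) / x powr x"

definition gfun :: "real \<Rightarrow> real" where
  "gfun x = 2 powr x * (1 + x) powr (1 + x) / x powr x"

definition afun :: "real \<Rightarrow> real" where
  "afun t = (THE x. x > 0 \<and> ffun x = t)"

definition bfun :: "real \<Rightarrow> real" where
  "bfun t = (THE x. x > 0 \<and> gfun x = t)"

definition kfun :: "nat \<Rightarrow> real \<Rightarrow> nat" where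
  "kfun d t = (THE k. real ((d + k) choose d) \<le> t ^ d \<and> t ^ d < real ((d + k + 1) choose d))"

definition lfun :: "nat \<Rightarrow> real \<Rightarrow> nat" where
  "lfun d t = (THE l. 2 ^ l * real ((d + l) choose d) \<le> t ^ d \<and>
                      t ^ d < 2 ^ (l + 1) * real ((d + l + 1) choose d))"

definition vertices :: "'a::euclidean_space set \<Rightarrow> 'a set" where
  "vertices K = {v. v extreme_point_of K}"

definition centrally_symmetric :: "'a::euclidean_space set \<Rightarrow> bool" where
  "centrally_symmetric K \<longleftrightarrow> (\<exists>c. \<forall>x\<in>K. (2::real) *\<^sub>R c - x \<in> K)"

end

theory Submission
  imports Defs "HOL-Real_Asymp.Real_Asymp"
begin

(* Write the polytope as the convex hull of its vertex set V.
   (a) If |V| = d + 1, put c_M = (sum of M) / (d + k) for each multiset M of k vertices. Take the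
   barycentric coordinates u of a point x, round the numbers (d + k) u_v down and keep k of the
   resulting units as M; the remaining weight, rescaled by (d + k) / d, is again a point of conv V.
   So the C(d + k, d) homothets c_M + d / (d + k) K cover K, and k = k(d, t) makes
   C(d + k, d) <= t^d = 2^n.
   (b) If V is symmetric about c, the weights of v and 2c - v act on the opposite vectors v - c and
   c - v, so they may be replaced by their positive parts: x = c + sum p_v (v - c) with
   sum p <= 1 and at most m of the p_v nonzero. The same rounding with multisets of at most l
   vertices gives C(2m + l, l) <= 2^l C(m + l, m) homothets of ratio m / (m + l).
   Finally, one term of the binomial expansion of (a / (1 + a) + 1 / (1 + a))^(d + j) shows
   C(d + j, d) <= f(a)^d whenever j <= a d, hence floor (a(t) d) <= k(d, t); likewise
   2^j C(d + j, d) <= g(b)^d gives floor (b(t) m) <= l(m, t). *)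

lemma step_index:
  fixes h :: "nat \<Rightarrow> nat" and T :: real
  assumes mono: "strict_mono h" and start: "h 0 \<le> T"
  defines "k \<equiv> THE k. real (h k) \<le> T \<and> T < real (h (Suc k))"
  shows step_index_le: "real (h k) \<le> T"
    and le_step_index: "real (h j) \<le> T \<Longrightarrow> j \<le> k"
proof -
  define P where "P i \<longleftrightarrow> real (h i) \<le> T" for i
  have bounded: "i \<le> nat \<lceil>T\<rceil>" if "P i" for i
    using strict_mono_imp_increasing[OF mono, of i] that unfolding P_def by linarith
  define g where "g = Greatest P"
  have "P g" unfolding g_def using start bounded by (intro GreatestI_nat[of P 0]) (auto simp: P_def)
  have "k = g" unfolding k_def
  proof (rule the_equality)
    have "\<not> P (Suc g)" using Greatest_le_nat[of P "Suc g", OF _ bounded] unfolding g_def by auto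
    then show "real (h g) \<le> T \<and> T < real (h (Suc g))" using \<open>P g\<close> unfolding P_def by simp
  next
    fix i assume i: "real (h i) \<le> T \<and> T < real (h (Suc i))"
    then have "i \<le> g"
      unfolding g_def using bounded by (intro Greatest_le_nat[of P i]) (auto simp: P_def)
    moreover have "h g < h (Suc i)" using \<open>P g\<close> i unfolding P_def by simp
    then have "g < Suc i" using strict_mono_less[OF mono] by blast
    ultimately show "i = g" by simp
  qed
  then show "real (h k) \<le> T" using \<open>P g\<close> P_def by simp
  show "j \<le> k" if "real (h j) \<le> T"
    unfolding \<open>k = g\<close> g_def using that bounded by (intro Greatest_le_nat[of P j]) (auto simp: P_def)
qed

lemma strict_mono_binomial: "d > 0 \<Longrightarrow> strict_mono (\<lambda>k. (d + k) choose d)"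
proof (unfold strict_mono_Suc_iff, intro allI)
  fix k assume "d > 0"
  then obtain e where d: "d = Suc e" using gr0_implies_Suc by blast
  have "(d + Suc k) choose d = ((d + k) choose e) + ((d + k) choose d)"
    unfolding d by (simp only: add_Suc_right binomial_Suc_Suc)
  moreover have "0 < (d + k) choose e" unfolding d by simp
  ultimately show "(d + k) choose d < (d + Suc k) choose d" by linarith
qed

lemma strict_mono_two_power_binomial: "d > 0 \<Longrightarrow> strict_mono (\<lambda>k. 2 ^ k * ((d + k) choose d))"
proof (unfold strict_mono_Suc_iff, intro allI)
  fix k assume "d > 0"
  then have "(d + k) choose d < (d + Suc k) choose d"
    using strict_monoD[OF strict_mono_binomial, of d k "Suc k"] by blast
  then have "2 ^ k * ((d + k) choose d) < 2 ^ k * ((d + Suc k) choose d)"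
    by (intro mult_strict_left_mono) auto
  also have "\<dots> \<le> 2 ^ Suc k * ((d + Suc k) choose d)"
    by (intro mult_right_mono) auto
  finally show "2 ^ k * ((d + k) choose d) < 2 ^ Suc k * ((d + Suc k) choose d)" .
qed

lemma kfun_eq:
  "kfun d t = (THE k. real ((d + k) choose d) \<le> t ^ d \<and> t ^ d < real ((d + Suc k) choose d))"
  unfolding kfun_def by (simp only: add_Suc_right Suc_eq_plus1 add.assoc)

lemma lfun_eq:
  "lfun d t = (THE k. real (2 ^ k * ((d + k) choose d)) \<le> t ^ d
                    \<and> t ^ d < real (2 ^ Suc k * ((d + Suc k) choose d)))"
  unfolding lfun_def
  by (simp only: add_Suc_right Suc_eq_plus1 add.assoc of_nat_mult of_nat_power of_nat_numeral)

context
  fixes d :: nat and t :: real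
  assumes d: "0 < d" and t: "1 \<le> t ^ d"
begin

lemma kfun_binomial_le: "real ((d + kfun d t) choose d) \<le> t ^ d"
  unfolding kfun_eq using t by (intro step_index_le[OF strict_mono_binomial[OF d]]) simp

lemma le_kfun: "real ((d + j) choose d) \<le> t ^ d \<Longrightarrow> j \<le> kfun d t"
  unfolding kfun_eq using t by (intro le_step_index[OF strict_mono_binomial[OF d]]) simp_all

lemma lfun_two_power_binomial_le: "2 ^ lfun d t * real ((d + lfun d t) choose d) \<le> t ^ d"
  using step_index_le[OF strict_mono_two_power_binomial[OF d], of "t ^ d"] t
  unfolding lfun_eq by simp

lemma le_lfun: "2 ^ j * real ((d + j) choose d) \<le> t ^ d \<Longrightarrow> j \<le> lfun d t"
  using le_step_index[OF strict_mono_two_power_binomial[OF d], of "t ^ d" j] t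
  unfolding lfun_eq by simp

end

lemma ex1_positive_solution:
  fixes h :: "real \<Rightarrow> real"
  assumes mono: "strict_mono_on {0<..} h" and cont: "continuous_on {0<..} h"
    and zero: "(h \<longlongrightarrow> 1) (at_right 0)" and infinity: "filterlim h at_top at_top"
    and "1 < t"
  shows "\<exists>!x. 0 < x \<and> h x = t"
proof (rule ex_ex1I)
  have "\<forall>\<^sub>F x in at_right 0. h x < t" using zero \<open>1 < t\<close> by (rule order_tendstoD)
  then obtain e where "0 < e" "\<And>x. 0 < x \<Longrightarrow> x < e \<Longrightarrow> h x < t"
    unfolding eventually_at_right_field by auto
  then obtain a where a: "0 < a" "h a < t" using field_lbound_gt_zero[of e 1] by auto
  have "\<forall>\<^sub>F x in at_top. t \<le> h x" using infinity by (simp add: filterlim_at_top)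
  then obtain N where "\<And>x. N \<le> x \<Longrightarrow> t \<le> h x" unfolding eventually_at_top_linorder by auto
  then have b: "a \<le> max a N" "t \<le> h (max a N)" by auto
  have "continuous_on {a..max a N} h" using cont by (rule continuous_on_subset) (use a in auto)
  then obtain x where "a \<le> x" "h x = t" using IVT'[of h a t "max a N"] a b by auto
  then show "\<exists>x. 0 < x \<and> h x = t" using a by (intro exI[of _ x]) auto
next
  show "x = y" if "0 < x \<and> h x = t" "0 < y \<and> h y = t" for x y
    using that strict_mono_onD[OF mono, of x y] strict_mono_onD[OF mono, of y x]
    by (cases x y rule: linorder_cases) auto
qed

lemma ffun_eq: "0 < x \<Longrightarrow> ffun x = (1 + x) * ((1 + x) / x) powr x"
  unfolding ffun_def by (simp add: powr_add powr_divide)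

lemma gfun_eq_ffun: "gfun x = 2 powr x * ffun x"
  unfolding gfun_def ffun_def by simp

lemma gfun_eq: "0 < x \<Longrightarrow> gfun x = (1 + x) * (2 * ((1 + x) / x)) powr x"
  unfolding gfun_eq_ffun
  by (simp add: ffun_eq powr_mult[of 2 "(1 + x) / x"] del: times_divide_eq_right)

lemma strict_mono_on_ffun: "strict_mono_on {0<..} ffun"
proof -
  define F where "F x = (1 + x) * ln (1 + x) - x * ln x" for x :: real
  have "F x < F y" if "0 < x" "x < y" for x y
  proof (rule DERIV_pos_imp_increasing[OF \<open>x < y\<close>])
    fix z :: real assume "x \<le> z" "z \<le> y"
    then have "0 < z" using \<open>0 < x\<close> by linarith
    then have "(F has_real_derivative ln (1 + z) - ln z) (at z)"
      unfolding F_def by (auto intro!: derivative_eq_intros)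
    moreover have "ln z < ln (1 + z)" using \<open>0 < z\<close> by simp
    ultimately show "\<exists>y. (F has_real_derivative y) (at z) \<and> 0 < y" by auto
  qed
  moreover have "ffun x = exp (F x)" if "0 < x" for x
    using that unfolding ffun_def F_def by (simp add: powr_def exp_diff)
  ultimately show ?thesis
    by (intro strict_mono_onI) (metis exp_less_cancel_iff greaterThan_iff)
qed

lemma strict_mono_on_gfun: "strict_mono_on {0<..} gfun"
proof (rule strict_mono_onI)
  fix x y :: real assume "x \<in> {0<..}" "y \<in> {0<..}" "x < y"
  moreover have "0 < ffun x" using \<open>x \<in> {0<..}\<close> by (simp add: ffun_def)
  ultimately show "gfun x < gfun y"
    unfolding gfun_eq_ffun using strict_mono_onD[OF strict_mono_on_ffun]
    by (intro mult_strict_mono) auto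
qed

lemma continuous_on_ffun: "continuous_on {0<..} ffun"
  unfolding ffun_def by (intro continuous_intros) auto

lemma continuous_on_gfun: "continuous_on {0<..} gfun"
  unfolding gfun_def by (intro continuous_intros) auto

lemma ffun_tendsto_1: "(ffun \<longlongrightarrow> 1) (at_right 0)"
  unfolding ffun_def by real_asymp

lemma gfun_tendsto_1: "(gfun \<longlongrightarrow> 1) (at_right 0)"
  unfolding gfun_def by real_asymp

lemma filterlim_ffun_at_top: "filterlim ffun at_top at_top"
  unfolding ffun_def by real_asymp

lemma filterlim_gfun_at_top: "filterlim gfun at_top at_top"
  unfolding gfun_def by real_asymp

lemma afun_solution: "1 < t \<Longrightarrow> 0 < afun t \<and> ffun (afun t) = t"
  unfolding afun_def
  by (rule theI', rule ex1_positive_solution[OF strict_mono_on_ffun continuous_on_ffun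
        ffun_tendsto_1 filterlim_ffun_at_top])

lemma bfun_solution: "1 < t \<Longrightarrow> 0 < bfun t \<and> gfun (bfun t) = t"
  unfolding bfun_def
  by (rule theI', rule ex1_positive_solution[OF strict_mono_on_gfun continuous_on_gfun
        gfun_tendsto_1 filterlim_gfun_at_top])

lemma two_powr_divide:
  assumes "0 < n" "0 < d"
  shows "1 < 2 powr (real n / real d)" "(2 powr (real n / real d)) ^ d = 2 ^ n"
proof -
  show "1 < 2 powr (real n / real d)" using assms by simp
  have "(2 powr (real n / real d)) ^ d = 2 powr (real d * (real n / real d))"
    by (simp add: powr_power)
  also have "\<dots> = 2 ^ n" using assms by (simp add: powr_realpow)
  finally show "(2 powr (real n / real d)) ^ d = 2 ^ n" .
qed

lemma binomial_mult_powers_le: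
  fixes p q :: real
  assumes "0 \<le> p" "0 \<le> q"
  shows "real ((d + j) choose d) * p ^ j * q ^ d \<le> (p + q) ^ (d + j)"
proof -
  have "real ((d + j) choose j) * p ^ j * q ^ (d + j - j)
      \<le> (\<Sum>i\<le>d + j. real ((d + j) choose i) * p ^ i * q ^ (d + j - i))"
    using assms by (intro member_le_sum) auto
  then show ?thesis by (simp add: binomial_ring binomial_symmetric[of d "d + j", simplified])
qed

lemma binomial_le_powr_bound:
  fixes a c :: real
  assumes "0 < a" "1 \<le> c" "real j \<le> a * real d"
  shows "c ^ j * real ((d + j) choose d) \<le> ((1 + a) * (c * ((1 + a) / a)) powr a) ^ d"
proof -
  have "1 \<le> (1 + a) / a" using assms by simp
  then have base: "1 \<le> c * ((1 + a) / a)" using assms mult_mono[of 1 c 1 "(1 + a) / a"] by simp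
  define B where "B = (1 + a) ^ d * ((1 + a) / a) ^ j"
  have "real ((d + j) choose d) * inverse B
      = real ((d + j) choose d) * (a / (1 + a)) ^ j * (1 / (1 + a)) ^ d"
    unfolding B_def using assms by (simp add: field_simps)
  also have "\<dots> \<le> (a / (1 + a) + 1 / (1 + a)) ^ (d + j)"
    using assms by (intro binomial_mult_powers_le) auto
  also have "a / (1 + a) + 1 / (1 + a) = 1" using assms by (simp add: field_simps)
  finally have "real ((d + j) choose d) * inverse B \<le> 1" by simp
  moreover have "0 < B" unfolding B_def using assms by simp
  ultimately have "real ((d + j) choose d) \<le> B" by (simp add: field_simps)
  then have "c ^ j * real ((d + j) choose d) \<le> c ^ j * B"
    using assms by (intro mult_left_mono) auto
  also have "\<dots> = (1 + a) ^ d * (c * ((1 + a) / a)) powr real j"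
    unfolding B_def using assms by (simp add: powr_realpow power_mult_distrib[symmetric])
  also have "\<dots> \<le> (1 + a) ^ d * (c * ((1 + a) / a)) powr (a * d)"
    using assms base by (intro mult_left_mono powr_mono) auto
  also have "\<dots> = ((1 + a) * (c * ((1 + a) / a)) powr a) ^ d"
    using assms by (simp add: power_mult_distrib powr_power mult.commute)
  finally show ?thesis .
qed

lemma floor_afun_le_kfun:
  assumes "1 < t" "0 < d"
  shows "nat \<lfloor>afun t * real d\<rfloor> \<le> kfun d t"
proof (rule le_kfun)
  have a: "0 < afun t" "ffun (afun t) = t" using afun_solution[OF \<open>1 < t\<close>] by auto
  have "real (nat \<lfloor>afun t * real d\<rfloor>) \<le> afun t * real d" using a(1) by (intro of_nat_floor) simp
  from binomial_le_powr_bound[OF a(1) order.refl this]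
  have "real ((d + nat \<lfloor>afun t * real d\<rfloor>) choose d) \<le> ffun (afun t) ^ d"
    by (simp only: ffun_eq[OF a(1)]) simp
  then show "real ((d + nat \<lfloor>afun t * real d\<rfloor>) choose d) \<le> t ^ d"
    by (simp only: a(2))
qed (use assms in simp_all)

lemma floor_bfun_le_lfun:
  assumes "1 < t" "0 < d"
  shows "nat \<lfloor>bfun t * real d\<rfloor> \<le> lfun d t"
proof (rule le_lfun)
  have b: "0 < bfun t" "gfun (bfun t) = t" using bfun_solution[OF \<open>1 < t\<close>] by auto
  have "real (nat \<lfloor>bfun t * real d\<rfloor>) \<le> bfun t * real d" using b(1) by (intro of_nat_floor) simp
  from binomial_le_powr_bound[OF b(1) _ this, of 2]
  have "2 ^ nat \<lfloor>bfun t * real d\<rfloor> * real ((d + nat \<lfloor>bfun t * real d\<rfloor>) choose d) \<le> gfun (bfun t) ^ d"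
    by (simp only: gfun_eq[OF b(1)])
  then show "2 ^ nat \<lfloor>bfun t * real d\<rfloor> * real ((d + nat \<lfloor>bfun t * real d\<rfloor>) choose d) \<le> t ^ d"
    by (simp only: b(2))
qed (use assms in simp_all)

lemma ratio_kfun_le_ratio_floor_afun:
  assumes "1 < t" "0 < d"
  shows "real d / real (d + kfun d t) \<le> real d / (real d + of_int \<lfloor>afun t * real d\<rfloor>)"
proof -
  have "0 \<le> afun t * real d" using afun_solution[OF \<open>1 < t\<close>] by simp
  then have "of_int \<lfloor>afun t * real d\<rfloor> = real (nat \<lfloor>afun t * real d\<rfloor>)" by simp
  then show ?thesis
    using floor_afun_le_kfun[OF assms] \<open>0 < d\<close> by (intro divide_left_mono) auto
qed

lemma ratio_lfun_le_ratio_floor_bfun: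
  assumes "1 < t" "0 < d"
  shows "real d / real (d + lfun d t) \<le> real d / (real d + of_int \<lfloor>bfun t * real d\<rfloor>)"
proof -
  have "0 \<le> bfun t * real d" using bfun_solution[OF \<open>1 < t\<close>] by simp
  then have "of_int \<lfloor>bfun t * real d\<rfloor> = real (nat \<lfloor>bfun t * real d\<rfloor>)" by simp
  then show ?thesis
    using floor_bfun_le_lfun[OF assms] \<open>0 < d\<close> by (intro divide_left_mono) auto
qed

lemma covering_functional_le:
  fixes K :: "'a::euclidean_space set"
  assumes "0 < \<gamma>" "finite C" "card C \<le> N" "K \<subseteq> (\<Union>c\<in>C. (\<lambda>x. c + \<gamma> *\<^sub>R x) ` K)"
  shows "covering_functional N K \<le> \<gamma>"
proof -
  have "infinite (UNIV - C :: 'a set)"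
    using \<open>finite C\<close> finite_imp_bounded not_bounded_UNIV by (metis Diff_infinite_finite)
  then obtain B where B: "finite B" "card B = N - card C" "B \<subseteq> UNIV - C"
    using infinite_arbitrarily_large by meson
  have "card (C \<union> B) = N"
    using B assms(2,3) by (subst card_Un_disjoint) auto
  then have "\<gamma> \<in> {\<gamma>. \<gamma> > 0 \<and> (\<exists>C. finite C \<and> card C = N \<and> K \<subseteq> (\<Union>c\<in>C. (\<lambda>x. c + \<gamma> *\<^sub>R x) ` K))}"
    using assms B by (intro CollectI conjI exI[of _ "C \<union> B"]) auto
  then show ?thesis
    unfolding covering_functional_def by (rule cInf_lower) (auto intro: bdd_belowI[of _ 0])
qed

lemma subconvex_combination_in_convex_hull:
  fixes V :: "'a::real_vector set"
  assumes V: "finite V" and c: "c \<in> convex hull V"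
    and q: "\<forall>v\<in>V. 0 \<le> q v" "sum q V \<le> 1"
  shows "c + (\<Sum>v\<in>V. q v *\<^sub>R (v - c)) \<in> convex hull V"
proof -
  obtain w where w: "\<forall>v\<in>V. 0 \<le> w v" "sum w V = 1" "(\<Sum>v\<in>V. w v *\<^sub>R v) = c"
    using c unfolding convex_hull_finite[OF V] by blast
  define s where "s = sum q V"
  define u where "u v = q v + (1 - s) * w v" for v
  have "c + (\<Sum>v\<in>V. q v *\<^sub>R (v - c)) = (1 - s) *\<^sub>R c + (\<Sum>v\<in>V. q v *\<^sub>R v)"
    unfolding s_def by (simp add: sum_subtractf scaleR_sum_left algebra_simps)
  also have "\<dots> = (\<Sum>v\<in>V. u v *\<^sub>R v)"
    unfolding u_def w(3)[symmetric]
    by (simp add: scaleR_add_left sum.distrib scaleR_sum_right add.commute)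
  finally show ?thesis
    unfolding convex_hull_finite[OF V] using q w
    by (intro CollectI exI[of _ u]) (auto simp: u_def s_def sum.distrib sum_distrib_left[symmetric])
qed

(* The centre c_M, written relative to a base point c so that it also serves multisets of fewer
   than l vertices: the missing vertices count as c. *)
definition homothety_centre :: "nat \<Rightarrow> nat \<Rightarrow> 'a \<Rightarrow> 'a multiset \<Rightarrow> 'a::real_vector" where
  "homothety_centre m l c M =
     (real l *\<^sub>R c + (\<Sum>v\<in>set_mset M. real (count M v) *\<^sub>R (v - c))) /\<^sub>R real (m + l)"

lemma combination_in_homothet:
  fixes V :: "'a::real_vector set" and m l :: nat
  assumes V: "finite V" "c \<in> convex hull V" and "0 < m"
    and M: "set_mset M \<subseteq> V" "\<forall>v\<in>V. real (count M v) \<le> real (m + l) * p v"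
    and slack: "(\<Sum>v\<in>V. real (m + l) * p v - real (count M v)) \<le> real m"
  shows "c + (\<Sum>v\<in>V. p v *\<^sub>R (v - c))
           \<in> (\<lambda>y. homothety_centre m l c M + (real m / real (m + l)) *\<^sub>R y) ` (convex hull V)"
proof (rule image_eqI)
  define D where "D = real (m + l)"
  define q where "q v = (D * p v - real (count M v)) / real m" for v
  have counts: "(\<Sum>v\<in>set_mset M. real (count M v) *\<^sub>R (v - c))
      = (\<Sum>v\<in>V. real (count M v) *\<^sub>R (v - c))"
    using M(1) V(1) by (intro sum.mono_neutral_left) (auto simp: not_in_iff)
  have "0 < D" using \<open>0 < m\<close> unfolding D_def by simp
  have weights: "real (count M v) / D + real m / D * q v = p v" for v
    using \<open>0 < m\<close> \<open>0 < D\<close> unfolding q_def by (simp add: field_simps)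
  have "real l / D + real m / D = 1"
    using \<open>0 < D\<close> unfolding add_divide_distrib[symmetric] by (simp add: D_def add.commute)
  then have "c + (\<Sum>v\<in>V. p v *\<^sub>R (v - c))
      = (real l / D + real m / D) *\<^sub>R c
        + (\<Sum>v\<in>V. (real (count M v) / D + real m / D * q v) *\<^sub>R (v - c))"
    by (simp only: weights scaleR_one)
  also have "\<dots> = homothety_centre m l c M + (real m / D) *\<^sub>R (c + (\<Sum>v\<in>V. q v *\<^sub>R (v - c)))"
    unfolding homothety_centre_def counts D_def[symmetric]
    by (simp add: scaleR_add_left scaleR_add_right scaleR_sum_right sum.distrib
        divide_inverse_commute)
  finally show "c + (\<Sum>v\<in>V. p v *\<^sub>R (v - c))
      = homothety_centre m l c M + (real m / real (m + l)) *\<^sub>R (c + (\<Sum>v\<in>V. q v *\<^sub>R (v - c)))"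
    unfolding D_def .
  have "\<forall>v\<in>V. 0 \<le> q v" using M(2) unfolding q_def D_def by auto
  moreover have "sum q V \<le> 1"
    using slack \<open>0 < m\<close> unfolding q_def D_def by (simp add: sum_divide_distrib[symmetric])
  ultimately show "c + (\<Sum>v\<in>V. q v *\<^sub>R (v - c)) \<in> convex hull V"
    by (rule subconvex_combination_in_convex_hull[OF V])
qed

lemma size_eq_sum_count: "finite V \<Longrightarrow> set_mset M \<subseteq> V \<Longrightarrow> size M = (\<Sum>v\<in>V. count M v)"
  unfolding size_multiset_overloaded_eq by (intro sum.mono_neutral_left) (auto simp: not_in_iff)

lemma ex_submultiset_of_size:
  assumes "k \<le> size N"
  shows "\<exists>M. M \<subseteq># N \<and> size M = k"
proof -
  obtain xs where "mset xs = N" using ex_mset by blast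
  then have "mset (take k xs) \<subseteq># N"
    by (metis append_take_drop_id mset_append mset_subset_eq_add_left)
  moreover have "size (mset (take k xs)) = k" using \<open>k \<le> size N\<close> \<open>mset xs = N\<close> by auto
  ultimately show ?thesis by blast
qed

lemma multiset_below_weights:
  fixes w :: "'a \<Rightarrow> real"
  assumes V: "finite V" and w: "\<forall>v\<in>V. 0 \<le> w v"
  obtains M where "set_mset M \<subseteq> V" "\<forall>v\<in>V. real (count M v) \<le> w v" "size M \<le> k"
    "size M = k \<or> (\<forall>v\<in>V. w v < real (count M v) + 1)"
proof -
  define F where "F = (\<Sum>v\<in>V. replicate_mset (nat \<lfloor>w v\<rfloor>) v)"
  have count_F: "count F v = (if v \<in> V then nat \<lfloor>w v\<rfloor> else 0)" for v
    unfolding F_def using V by (simp add: count_sum)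
  have sub: "set_mset M \<subseteq> V \<and> (\<forall>v\<in>V. real (count M v) \<le> w v)" if "M \<subseteq># F" for M
  proof (intro conjI ballI subsetI)
    fix v
    assume "v \<in># M"
    then have "v \<in># F" by (rule mset_subset_eqD[OF that])
    then show "v \<in> V" using count_F[of v] not_in_iff[of v F] by (auto split: if_splits)
  next
    fix v assume "v \<in> V"
    then have "real (count M v) \<le> real (nat \<lfloor>w v\<rfloor>)"
      using mset_subset_eq_count[OF that, of v] count_F[of v] by simp
    also have "\<dots> \<le> w v" using w \<open>v \<in> V\<close> by (intro of_nat_floor) simp
    finally show "real (count M v) \<le> w v" .
  qed
  show ?thesis
  proof (cases "k \<le> size F")
    case True
    then obtain M where "M \<subseteq># F" "size M = k" using ex_submultiset_of_size by blast
    then show ?thesis using that sub by blast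
  next
    case False
    have "\<forall>v\<in>V. w v < real (count F v) + 1" using count_F w by simp
    then show ?thesis using that[of F] sub False by auto
  qed
qed

lemma simplex_covered_by_homothets:
  fixes V :: "'a::real_vector set"
  assumes V: "finite V" "card V = Suc d" and "0 < d" and c: "c \<in> convex hull V"
  shows "convex hull V \<subseteq> (\<Union>M\<in>multisets_of_size V k.
           (\<lambda>y. homothety_centre d k c M + (real d / real (d + k)) *\<^sub>R y) ` (convex hull V))"
proof
  fix x assume "x \<in> convex hull V"
  then obtain u where u: "\<forall>v\<in>V. 0 \<le> u v" "sum u V = 1" "(\<Sum>v\<in>V. u v *\<^sub>R v) = x"
    unfolding convex_hull_finite[OF V(1)] by blast
  define D where "D = real (d + k)"
  obtain M where M: "set_mset M \<subseteq> V" "\<forall>v\<in>V. real (count M v) \<le> D * u v" "size M \<le> k"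
      "size M = k \<or> (\<forall>v\<in>V. D * u v < real (count M v) + 1)"
    using multiset_below_weights[OF V(1), of "\<lambda>v. D * u v" k] u(1) unfolding D_def by auto
  have sum_count: "(\<Sum>v\<in>V. real (count M v)) = real (size M)"
    using size_eq_sum_count[OF V(1) M(1)] by simp
  have "size M = k"
  proof (rule ccontr)
    assume "size M \<noteq> k"
    then have "(\<Sum>v\<in>V. D * u v) < (\<Sum>v\<in>V. real (count M v) + 1)"
      using M(4) V by (intro sum_strict_mono) auto
    then have "D < real (size M) + real (Suc d)"
      using u(2) sum_count V(2) by (simp add: sum_distrib_left[symmetric] sum.distrib)
    then show False using M(3) \<open>size M \<noteq> k\<close> unfolding D_def by linarith
  qed
  have "x = c + (\<Sum>v\<in>V. u v *\<^sub>R (v - c))"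
    using u(2,3) by (simp add: scaleR_diff_right sum_subtractf scaleR_sum_left[symmetric])
  also have "\<dots> \<in> (\<lambda>y. homothety_centre d k c M + (real d / real (d + k)) *\<^sub>R y) ` (convex hull V)"
    using M u sum_count \<open>size M = k\<close>
    by (intro combination_in_homothet[OF V(1) c \<open>0 < d\<close>])
       (auto simp: D_def sum_subtractf sum_distrib_left[symmetric])
  finally show "x \<in> (\<Union>M\<in>multisets_of_size V k.
      (\<lambda>y. homothety_centre d k c M + (real d / real (d + k)) *\<^sub>R y) ` (convex hull V))"
    using M(1) \<open>size M = k\<close> unfolding multisets_of_size_def by blast
qed

lemma covering_functional_simplex_le:
  fixes V :: "'a::euclidean_space set"
  assumes V: "finite V" "card V = Suc d" and "0 < d" and N: "(d + k) choose d \<le> N"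
  shows "covering_functional N (convex hull V) \<le> real d / real (d + k)"
proof -
  obtain c where c: "c \<in> convex hull V"
    using V(2) hull_subset by fastforce
  let ?C = "homothety_centre d k c ` multisets_of_size V k"
  have "card ?C \<le> card (multisets_of_size V k)"
    using V(1) by (intro card_image_le) auto
  also have "\<dots> = (d + k) choose d"
    using V by (simp add: card_multisets_of_size binomial_symmetric[of d "d + k", simplified])
  moreover have "convex hull V \<subseteq> (\<Union>z\<in>?C. (\<lambda>y. z + (real d / real (d + k)) *\<^sub>R y) ` (convex hull V))"
    using simplex_covered_by_homothets[OF V \<open>0 < d\<close> c, of k] by (simp add: image_image)
  ultimately show ?thesis
    using V(1) N \<open>0 < d\<close> by (intro covering_functional_le[where C = ?C]) auto
qed

lemma card_multisets_size_at_most: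
  assumes "finite A"
  shows "card {M. set_mset M \<subseteq> A \<and> size M \<le> l} = (card A + l) choose l"
proof (cases "A = {}")
  case True
  then have "{M. set_mset M \<subseteq> A \<and> size M \<le> l} = {{#}}" by auto
  then show ?thesis using True by simp
next
  case False
  then obtain r where r: "card A = Suc r" using assms by (metis card_0_eq not0_implies_Suc)
  have "card {M. set_mset M \<subseteq> A \<and> size M \<le> l} = card (\<Union>j\<le>l. multisets_of_size A j)"
    by (rule arg_cong[where f = card]) (auto simp: multisets_of_size_def)
  also have "\<dots> = (\<Sum>j\<le>l. card (multisets_of_size A j))"
  proof (rule card_UN_disjoint)
    show "\<forall>j\<in>{..l}. finite (multisets_of_size A j)" using assms by blast
  qed (auto simp: multisets_of_size_def)
  also have "\<dots> = (\<Sum>j\<le>l. (r + j) choose j)"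
    using assms r by (simp add: card_multisets_of_size)
  finally show ?thesis using r by (simp add: sum_choose_lower)
qed

lemma binomial_double_le: "(2 * m + l) choose l \<le> 2 ^ l * ((m + l) choose l)"
proof (induction l)
  case (Suc l)
  have "Suc l * ((2 * m + Suc l) choose Suc l) = (2 * m + Suc l) * ((2 * m + l) choose l)"
    using Suc_times_binomial[of l "2 * m + l"] by simp
  also have "\<dots> \<le> (2 * (m + Suc l)) * (2 ^ l * ((m + l) choose l))"
    using Suc.IH by (intro mult_mono) auto
  also have "\<dots> = 2 ^ Suc l * ((m + Suc l) * ((m + l) choose l))"
    by (simp only: power_Suc mult_ac)
  also have "(m + Suc l) * ((m + l) choose l) = Suc l * ((m + Suc l) choose Suc l)"
    using Suc_times_binomial[of l "m + l"] by simp
  finally show ?case by (simp only: mult.left_commute[of "2 ^ Suc l"] Suc_mult_le_cancel1)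
qed simp

lemma symmetric_hull_sparse_combination:
  fixes V :: "'a::real_vector set"
  assumes V: "finite V" and sym: "\<forall>v\<in>V. 2 *\<^sub>R c - v \<in> V" and x: "x \<in> convex hull V"
  obtains p where "\<forall>v\<in>V. 0 \<le> p v" "sum p V \<le> 1" "2 * card {v\<in>V. 0 < p v} \<le> card V"
    "x = c + (\<Sum>v\<in>V. p v *\<^sub>R (v - c))"
proof -
  define \<sigma> where "\<sigma> v = 2 *\<^sub>R c - v" for v
  have \<sigma>\<sigma>: "\<sigma> (\<sigma> v) = v" for v unfolding \<sigma>_def by simp
  have inj: "inj_on \<sigma> V" by (metis \<sigma>\<sigma> inj_on_inverseI)
  have \<sigma>_mem: "\<sigma> v \<in> V" if "v \<in> V" for v using sym that unfolding \<sigma>_def by blast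
  have \<sigma>V: "\<sigma> ` V = V"
    using \<sigma>_mem \<sigma>\<sigma> by (metis image_eqI subsetI subset_antisym image_subsetI)
  define A where "A f = (\<Sum>v\<in>V. f v *\<^sub>R (v - c))" for f :: "'a \<Rightarrow> real"
  have reflect: "A (\<lambda>v. f (\<sigma> v)) = - A f" for f
  proof -
    have "A (\<lambda>v. f (\<sigma> v)) = (\<Sum>v\<in>V. f (\<sigma> v) *\<^sub>R (c - \<sigma> v))"
      unfolding A_def \<sigma>_def by (intro sum.cong) (auto simp: algebra_simps scaleR_2)
    also have "\<dots> = (\<Sum>w\<in>\<sigma> ` V. f w *\<^sub>R (c - w))" by (simp add: sum.reindex[OF inj])
    also have "\<dots> = - A f" unfolding \<sigma>V A_def by (simp add: sum_negf[symmetric] algebra_simps)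
    finally show ?thesis .
  qed
  have A_diff: "A (\<lambda>v. f v - g v) = A f - A g" for f g
    unfolding A_def by (simp add: scaleR_diff_left sum_subtractf)
  obtain u where u: "\<forall>v\<in>V. 0 \<le> u v" "sum u V = 1" "(\<Sum>v\<in>V. u v *\<^sub>R v) = x"
    using x unfolding convex_hull_finite[OF V] by blast
  \<comment> \<open>Since \<open>A (f \<circ> \<sigma>) = - A f\<close>, \<open>A f\<close> only depends on \<open>f - f \<circ> \<sigma>\<close>, which is the same
    for \<open>p\<close> and \<open>u\<close>; and \<open>p\<close> never charges both \<open>v\<close> and \<open>\<sigma> v\<close>.\<close>
  define p where "p v = max 0 (u v - u (\<sigma> v))" for v
  have "A p - A (\<lambda>v. p (\<sigma> v)) = A u - A (\<lambda>v. u (\<sigma> v))"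
    unfolding A_diff[symmetric] p_def \<sigma>\<sigma> by (rule arg_cong[where f = A]) auto
  then have "A p = A u" unfolding reflect by (simp add: scaleR_2[symmetric])
  also have "A u = x - c"
    unfolding A_def u(3)[symmetric] using u(2)
    by (simp add: scaleR_diff_right sum_subtractf scaleR_sum_left[symmetric])
  finally have x_eq: "x = c + A p" by simp
  have p_le_u: "p v \<le> u v" if "v \<in> V" for v
    using that u(1) \<sigma>V unfolding p_def by force
  define S where "S = {v\<in>V. 0 < p v}"
  have "S \<inter> \<sigma> ` S = {}" unfolding S_def p_def using \<sigma>\<sigma> by force
  then have "card S + card (\<sigma> ` S) \<le> card V"
    using V \<sigma>V by (subst card_Un_disjoint[symmetric]) (auto simp: S_def intro!: card_mono)
  moreover have "card (\<sigma> ` S) = card S"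
    using inj by (intro card_image) (auto simp: S_def intro: inj_on_subset)
  ultimately have "2 * card S \<le> card V" by simp
  moreover have "sum p V \<le> 1" using sum_mono[of V p u] p_le_u u(2) by simp
  ultimately show ?thesis using x_eq unfolding S_def A_def by (intro that[of p]) (auto simp: p_def)
qed

lemma point_reflection_centre_in_convex_hull:
  assumes "\<forall>v\<in>V. 2 *\<^sub>R c - v \<in> V" "v \<in> V"
  shows "c \<in> convex hull V"
proof -
  have "(1 / 2) *\<^sub>R v + (1 / 2) *\<^sub>R (2 *\<^sub>R c - v) \<in> convex hull V"
    using assms by (intro convexD[OF convex_convex_hull]) (auto intro: hull_inc)
  then show ?thesis by (simp add: algebra_simps)
qed

lemma symmetric_hull_covered_by_homothets:
  fixes V :: "'a::real_vector set"
  assumes V: "finite V" "card V = 2 * m" and "0 < m" and sym: "\<forall>v\<in>V. 2 *\<^sub>R c - v \<in> V"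
  shows "convex hull V \<subseteq> (\<Union>M\<in>{M. set_mset M \<subseteq> V \<and> size M \<le> l}.
           (\<lambda>y. homothety_centre m l c M + (real m / real (m + l)) *\<^sub>R y) ` (convex hull V))"
proof
  obtain v where "v \<in> V" using V(2) \<open>0 < m\<close> by fastforce
  with sym have c: "c \<in> convex hull V" by (rule point_reflection_centre_in_convex_hull)
  fix x assume "x \<in> convex hull V"
  then obtain p where p: "\<forall>v\<in>V. 0 \<le> p v" "sum p V \<le> 1" "2 * card {v\<in>V. 0 < p v} \<le> card V"
      and x: "x = c + (\<Sum>v\<in>V. p v *\<^sub>R (v - c))"
    using symmetric_hull_sparse_combination[OF V(1) sym] by blast
  define D where "D = real (m + l)"
  obtain M where M: "set_mset M \<subseteq> V" "\<forall>v\<in>V. real (count M v) \<le> D * p v" "size M \<le> l"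
      "size M = l \<or> (\<forall>v\<in>V. D * p v < real (count M v) + 1)"
    using multiset_below_weights[OF V(1), of "\<lambda>v. D * p v" l] p(1) unfolding D_def by auto
  have slack: "(\<Sum>v\<in>V. D * p v - real (count M v)) \<le> real m"
    using M(4)
  proof
    assume "size M = l"
    have "(\<Sum>v\<in>V. D * p v - real (count M v)) = D * sum p V - real l"
      using size_eq_sum_count[OF V(1) M(1)] \<open>size M = l\<close>
      by (simp add: sum_subtractf sum_distrib_left)
    also have "\<dots> \<le> D - real l" using mult_left_mono[OF p(2), of D] unfolding D_def by simp
    finally show ?thesis unfolding D_def by simp
  next
    assume floor: "\<forall>v\<in>V. D * p v < real (count M v) + 1"
    have "(\<Sum>v\<in>V. D * p v - real (count M v)) \<le> (\<Sum>v\<in>V. if 0 < p v then 1 else 0)"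
      using floor M(2) p(1) by (intro sum_mono) (fastforce simp: order.order_iff_strict)
    also have "\<dots> = real (card {v\<in>V. 0 < p v})" using V(1) by (simp add: sum.inter_filter[symmetric])
    also have "\<dots> \<le> real m" using p(3) V(2) by simp
    finally show ?thesis .
  qed
  have "x \<in> (\<lambda>y. homothety_centre m l c M + (real m / real (m + l)) *\<^sub>R y) ` (convex hull V)"
    unfolding x using M(1,2) slack
    by (intro combination_in_homothet[OF V(1) c \<open>0 < m\<close>]) (auto simp: D_def)
  then show "x \<in> (\<Union>M\<in>{M. set_mset M \<subseteq> V \<and> size M \<le> l}.
      (\<lambda>y. homothety_centre m l c M + (real m / real (m + l)) *\<^sub>R y) ` (convex hull V))"
    using M(1,3) by blast
qed

lemma covering_functional_symmetric_le:
  fixes V :: "'a::euclidean_space set"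
  assumes V: "finite V" "card V = 2 * m" and "0 < m" and sym: "\<forall>v\<in>V. 2 *\<^sub>R c - v \<in> V"
    and N: "2 ^ l * ((m + l) choose m) \<le> N"
  shows "covering_functional N (convex hull V) \<le> real m / real (m + l)"
proof -
  let ?C = "homothety_centre m l c ` {M. set_mset M \<subseteq> V \<and> size M \<le> l}"
  have fin: "finite {M. set_mset M \<subseteq> V \<and> size M \<le> l}"
    using card_multisets_size_at_most[OF V(1), of l] by (intro card_ge_0_finite) simp
  have "card ?C \<le> card {M. set_mset M \<subseteq> V \<and> size M \<le> l}"
    using fin by (rule card_image_le)
  also have "\<dots> = (2 * m + l) choose l" using card_multisets_size_at_most[OF V(1)] V(2) by simp
  also have "\<dots> \<le> 2 ^ l * ((m + l) choose m)"
    using binomial_double_le[of m l] by (simp add: binomial_symmetric[of m "m + l", simplified])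
  finally have "card ?C \<le> N" using N by simp
  moreover have "convex hull V \<subseteq> (\<Union>z\<in>?C. (\<lambda>y. z + (real m / real (m + l)) *\<^sub>R y) ` (convex hull V))"
    using symmetric_hull_covered_by_homothets[OF V \<open>0 < m\<close> sym, of l] by (simp add: image_image)
  ultimately show ?thesis
    using \<open>0 < m\<close> fin by (intro covering_functional_le[where C = ?C]) auto
qed

lemma extreme_point_of_point_reflection:
  fixes K :: "'a::real_vector set"
  assumes sym: "\<forall>x\<in>K. 2 *\<^sub>R c - x \<in> K" and v: "v extreme_point_of K"
  shows "(2 *\<^sub>R c - v) extreme_point_of K"
  unfolding extreme_point_of_def
proof (intro conjI ballI)
  show "2 *\<^sub>R c - v \<in> K" using v sym by (simp add: extreme_point_of_def)
next
  fix a b assume "a \<in> K" "b \<in> K"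
  then have "v \<notin> open_segment (2 *\<^sub>R c - a) (2 *\<^sub>R c - b)"
    using v sym by (simp add: extreme_point_of_def)
  moreover have "2 *\<^sub>R c - x \<in> open_segment (2 *\<^sub>R c - a) (2 *\<^sub>R c - b)"
    if "x \<in> open_segment a b" for x
    using that by (auto simp: in_segment algebra_simps)
  ultimately show "2 *\<^sub>R c - v \<notin> open_segment a b" by force
qed

lemma polytope_eq_convex_hull_vertices: "polytope K \<Longrightarrow> K = convex hull (vertices K)"
  unfolding vertices_def
  by (simp add: Krein_Milman_Minkowski polytope_imp_compact polytope_imp_convex)

lemma covering_functional_polytope_le:
  fixes K :: "'a::euclidean_space set"
  assumes K: "polytope K" and V: "card (vertices K) = Suc d" and n: "DIM('a) \<le> d"
  defines "t \<equiv> 2 powr (real DIM('a) / real d)"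
  shows "covering_functional (2 ^ DIM('a)) K \<le> real d / real (d + kfun d t)"
proof -
  have "0 < d" using n DIM_positive[where 'a = 'a] by linarith
  note t = two_powr_divide[OF DIM_positive[where 'a = 'a] \<open>0 < d\<close>, folded t_def]
  have "real ((d + kfun d t) choose d) \<le> t ^ d"
    using t by (intro kfun_binomial_le[OF \<open>0 < d\<close>]) simp
  then have "real ((d + kfun d t) choose d) \<le> real (2 ^ DIM('a))" unfolding t(2) by simp
  then have "(d + kfun d t) choose d \<le> 2 ^ DIM('a)" by (rule of_nat_le_iff[THEN iffD1])
  then have "covering_functional (2 ^ DIM('a)) (convex hull (vertices K))
      \<le> real d / real (d + kfun d t)"
    using V \<open>0 < d\<close> by (intro covering_functional_simplex_le) (auto intro: card_ge_0_finite)
  then show ?thesis by (simp only: flip: polytope_eq_convex_hull_vertices[OF K])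
qed

lemma covering_functional_symmetric_polytope_le:
  fixes K :: "'a::euclidean_space set"
  assumes K: "polytope K" "centrally_symmetric K"
    and V: "card (vertices K) = 2 * m" and n: "DIM('a) \<le> m"
  defines "t \<equiv> 2 powr (real DIM('a) / real m)"
  shows "covering_functional (2 ^ DIM('a)) K \<le> real m / real (m + lfun m t)"
proof -
  have "0 < m" using n DIM_positive[where 'a = 'a] by linarith
  then have "finite (vertices K)" using V by (intro card_ge_0_finite) simp
  obtain c where "\<forall>x\<in>K. 2 *\<^sub>R c - x \<in> K" using K(2) unfolding centrally_symmetric_def by blast
  then have sym: "\<forall>v\<in>vertices K. 2 *\<^sub>R c - v \<in> vertices K"
    using extreme_point_of_point_reflection unfolding vertices_def by blast
  note t = two_powr_divide[OF DIM_positive[where 'a = 'a] \<open>0 < m\<close>, folded t_def]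
  have "2 ^ lfun m t * real ((m + lfun m t) choose m) \<le> t ^ m"
    using t by (intro lfun_two_power_binomial_le[OF \<open>0 < m\<close>]) simp
  then have "real (2 ^ lfun m t * ((m + lfun m t) choose m)) \<le> real (2 ^ DIM('a))"
    unfolding t(2) by simp
  then have "2 ^ lfun m t * ((m + lfun m t) choose m) \<le> 2 ^ DIM('a)"
    by (rule of_nat_le_iff[THEN iffD1])
  then have "covering_functional (2 ^ DIM('a)) (convex hull (vertices K))
      \<le> real m / real (m + lfun m t)"
    using V sym \<open>0 < m\<close> \<open>finite (vertices K)\<close> by (intro covering_functional_symmetric_le) auto
  then show ?thesis by (simp only: flip: polytope_eq_convex_hull_vertices[OF K(1)])
qed

theorem theorem4p3:
  fixes K :: "'a::euclidean_space set" and m :: nat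
  assumes "polytope K"
  shows "(card (vertices K) = m \<and> m \<ge> DIM('a) + 1 \<longrightarrow>
           (let t = 2 powr (real DIM('a) / real (m - 1)) in
              covering_functional (2 ^ DIM('a)) K
                \<le> real (m - 1) / real (m - 1 + kfun (m - 1) t)
            \<and> real (m - 1) / real (m - 1 + kfun (m - 1) t)
                \<le> real (m - 1) / (real (m - 1) + of_int \<lfloor>afun t * real (m - 1)\<rfloor>)))
       \<and> (centrally_symmetric K \<and> card (vertices K) = 2 * m \<and> m \<ge> DIM('a) \<longrightarrow>
           (let t = 2 powr (real DIM('a) / real m) in
              covering_functional (2 ^ DIM('a)) K
                \<le> real m / real (m + lfun m t)
            \<and> real m / real (m + lfun m t)
                \<le> real m / (real m + of_int \<lfloor>bfun t * real m\<rfloor>)))"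
proof (intro conjI impI)
  assume "card (vertices K) = m \<and> m \<ge> DIM('a) + 1"
  then have V: "card (vertices K) = Suc (m - 1)" and n: "DIM('a) \<le> m - 1" by auto
  then have "0 < m - 1" using DIM_positive[where 'a = 'a] by linarith
  then show "let t = 2 powr (real DIM('a) / real (m - 1)) in
              covering_functional (2 ^ DIM('a)) K
                \<le> real (m - 1) / real (m - 1 + kfun (m - 1) t)
            \<and> real (m - 1) / real (m - 1 + kfun (m - 1) t)
                \<le> real (m - 1) / (real (m - 1) + of_int \<lfloor>afun t * real (m - 1)\<rfloor>)"
    unfolding Let_def using covering_functional_polytope_le[OF assms V n]
    by (intro conjI ratio_kfun_le_ratio_floor_afun two_powr_divide(1) DIM_positive)
next
  assume "centrally_symmetric K \<and> card (vertices K) = 2 * m \<and> m \<ge> DIM('a)"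
  then have sym: "centrally_symmetric K" and V: "card (vertices K) = 2 * m" and n: "DIM('a) \<le> m"
    by auto
  then have "0 < m" using DIM_positive[where 'a = 'a] by linarith
  then show "let t = 2 powr (real DIM('a) / real m) in
              covering_functional (2 ^ DIM('a)) K
                \<le> real m / real (m + lfun m t)
            \<and> real m / real (m + lfun m t)
                \<le> real m / (real m + of_int \<lfloor>bfun t * real m\<rfloor>)"
    unfolding Let_def using covering_functional_symmetric_polytope_le[OF assms sym V n]
    by (intro conjI ratio_lfun_le_ratio_floor_bfun two_powr_divide(1) DIM_positive)
qed

end
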